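(* Let $p_X=\sum_{j=1}^{N_r}m_j\delta_{x_j}$ with $m_j\ge 0$, $\sum_j m_j=1$, and $x_j$ the standard points. (a) If $r\notin\mathbb{N}$ (so $N_r=2n+2$), set $m_0:=0$ and $m_{2n+3}:=0$, and assume $m_{j-1}+m_j>0$ for all $j=1,\dots,2n+3$. Then for each $j=1,\dots,2n+1$, the map $x\mapsto i(x;p_X)$ is affine on $[x_j,x_{j+1}]$ with slope $$r\log\frac{m_{j-1}+m_j}{m_{j+1}+m_{j+2}}.$$ (b) If $r\in\mathbb{N}$ (so $N_r=n+1$) and all $m_j>0$, then for each $j=1,\dots,n$ the map $x\mapsto i(x;p_X)$ is affine on $[x_j,x_{j+1}]$ with slope $r\log(m_j/m_{j+1})$.
   Context: Fix $b>0$ and set $r:=1/(2b)$, $n:=\lfloor r\rfloor$. Consider the additive uniform noise channel $Y=X+N$ with $N\sim\mathrm{Uniform}(-b,b)$ independent of $X$, so the transition density is $p_N(y\mid x)=r\,\mathbf{1}_{x-b<y<x+b}$. For a probability distribution $p_X$ on $[0,1]$ the output density is $p_Y(y;p_X)=\int p_N(y\mid x)\,dp_X(x)$ and the marginal information density is $i(x;p_X)=\int p_N(y\mid x)\log\frac{p_N(y\mid x)}{p_Y(y;p_X)}\,dy$. Standard points: let $N_r=n+1$ if $r\in\mathbb{N}$ and $N_r=2n+2$ if $r\notin\mathbb{N}$. For $j=1,\dots,N_r$ set $x_j=(j-1)/n$ if $r\in\mathbb{N}$; if $r\notin\mathbb{N}$, set $x_j=(j-1)/(2r)$ for odd $j$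 and $x_j=1-(2n+2-j)/(2r)$ for even $j$ (these satisfy $0=x_1<x_2<\dots<x_{N_r}=1$). *)

theory Defs
  imports "HOL-Probability.Probability"
begin

text \<open>Additive uniform noise channel Y = X + N, N ~ Uniform(-b,b).\<close>

definition rr :: "real \<Rightarrow> real" where
  "rr b = 1 / (2 * b)"

definition nn :: "real \<Rightarrow> nat" where
  "nn b = nat \<lfloor>rr b\<rfloor>"

definition Nr :: "real \<Rightarrow> nat" where
  "Nr b = (if rr b \<in> \<nat> then nn b + 1 else 2 * nn b + 2)"

definition std_pt :: "real \<Rightarrow> nat \<Rightarrow> real" where
  "std_pt b j =
     (if rr b \<in> \<nat> then (real j - 1) / real (nn b)
      else if odd j then (real j - 1) / (2 * rr b)
      else 1 - (2 * real (nn b) + 2 - real j) / (2 * rr b))"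

definition pN :: "real \<Rightarrow> real \<Rightarrow> real \<Rightarrow> real" where
  "pN b y x = rr b * indicator {x - b <..< x + b} y"

definition pY :: "real \<Rightarrow> real pmf \<Rightarrow> real \<Rightarrow> real" where
  "pY b P y = integral\<^sup>L (measure_pmf P) (\<lambda>x. pN b y x)"

definition info_dens :: "real \<Rightarrow> real pmf \<Rightarrow> real \<Rightarrow> real" where
  "info_dens b P x = integral\<^sup>L lborel (\<lambda>y. pN b y x * ln (pN b y x / pY b P y))"

end

theory Submission
  imports Defs
begin

text \<open>For a finitely supported input, \<open>p\<^sub>Y\<close> is a step function: \<open>p\<^sub>Y(y)\<close> is \<open>r\<close> times the mass
  of the support points within distance \<open>b\<close> of \<open>y\<close>, and \<open>i(x)\<close> is the integral of
  \<open>r log (r / p\<^sub>Y)\<close> over the window \<open>(x - b, x + b)\<close>. The standard points recur at distance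
  \<open>2b\<close> with period 1 (\<open>r \<in> \<nat>\<close>) or 2 (\<open>r \<notin> \<nat>\<close>), so while \<open>x\<close> moves between two consecutive
  standard points each edge of the window stays inside one step of \<open>p\<^sub>Y\<close>: the right edge sees
  the next \<open>p\<close> points, the left edge the last \<open>p\<close> points. Hence \<open>i\<close> changes at the constant
  rate \<open>r log (r / p\<^sub>Y(x + b)) - r log (r / p\<^sub>Y(x - b))\<close>, which is the claimed slope.\<close>

lemma set_pmf_subset_if_sum_pmf_eq_1:
  assumes "finite S" and "sum (pmf P) S = 1"
  shows "set_pmf P \<subseteq> S"
proof
  fix x assume "x \<in> set_pmf P"
  show "x \<in> S"
  proof (rule ccontr)
    assume "x \<notin> S"
    then have "measure_pmf.prob P (insert x S) = pmf P x + 1"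
      using assms by (simp add: measure_measure_pmf_finite)
    moreover have "pmf P x > 0" using \<open>x \<in> set_pmf P\<close> by (simp add: set_pmf_eq')
    ultimately show False using measure_pmf.prob_le_1[of P "insert x S"] by linarith
  qed
qed

lemma pY_eq_sum_indicator:
  fixes s :: "'a \<Rightarrow> real"
  assumes "finite A" and "inj_on s A" and "\<forall>k\<in>A. pmf P (s k) = m k" and "sum m A = 1"
  shows "pY b P = (\<lambda>y. \<Sum>k\<in>A. rr b * indicator {s k - b<..<s k + b} y * m k)"
proof
  fix y
  have "sum (pmf P) (s ` A) = 1"
    using assms by (simp add: sum.reindex)
  then have "set_pmf P \<subseteq> s ` A"
    using assms(1) by (intro set_pmf_subset_if_sum_pmf_eq_1) auto
  then have "pY b P y = (\<Sum>x\<in>s ` A. pN b y x * pmf P x)"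
    unfolding pY_def using assms(1) by (intro integral_measure_pmf_real) auto
  also have "\<dots> = (\<Sum>k\<in>A. rr b * indicator {s k - b<..<s k + b} y * m k)"
    using assms(2,3) by (simp add: sum.reindex pN_def)
  finally show "pY b P y = (\<Sum>k\<in>A. rr b * indicator {s k - b<..<s k + b} y * m k)" .
qed

lemma pY_eq_sum_near_points:
  fixes s :: "'a \<Rightarrow> real"
  assumes "finite A" and "inj_on s A" and "\<forall>k\<in>A. pmf P (s k) = m k" and "sum m A = 1"
  shows "pY b P y = rr b * sum m {k\<in>A. y - b < s k \<and> s k < y + b}"
  using assms(1) unfolding pY_eq_sum_indicator[OF assms]
  by (simp add: sum.inter_filter sum_distrib_left) (auto intro!: sum.cong split: split_indicator)

lemma borel_measurable_pY:
  fixes s :: "'a \<Rightarrow> real"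
  assumes "finite A" and "inj_on s A" and "\<forall>k\<in>A. pmf P (s k) = m k" and "sum m A = 1"
  shows "pY b P \<in> borel_measurable borel"
  unfolding pY_eq_sum_indicator[OF assms] by measurable

lemma finite_range_pY:
  fixes s :: "'a \<Rightarrow> real"
  assumes "finite A" and "inj_on s A" and "\<forall>k\<in>A. pmf P (s k) = m k" and "sum m A = 1"
  shows "finite (range (pY b P))"
proof (rule finite_subset)
  show "range (pY b P) \<subseteq> (\<lambda>K. rr b * sum m K) ` Pow A"
    using pY_eq_sum_near_points[OF assms] by blast
qed (use assms(1) in simp)

lemma set_integral_eq_const_AE:
  fixes F :: "real \<Rightarrow> real"
  assumes "F \<in> borel_measurable lborel" and "A \<in> sets lborel" and "emeasure lborel A \<noteq> \<infinity>"
    and "AE y in lborel. y \<in> A \<longrightarrow> F y = c"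
  shows "set_lebesgue_integral lborel A F = measure lborel A * c"
proof -
  have "set_lebesgue_integral lborel A F = set_lebesgue_integral lborel A (\<lambda>_. c)"
    using assms by (intro set_lebesgue_integral_cong_AE) auto
  also have "\<dots> = measure lborel A * c"
    using assms(2,3) by (simp add: set_integral_const)
  finally show ?thesis .
qed

text \<open>Moving the window from \<open>x\<^sub>0\<close> to \<open>x\<close> gains \<open>(x\<^sub>0 + b, x + b]\<close>, where \<open>F = c\<^sub>p\<close>,
  and loses \<open>(x\<^sub>0 - b, x - b]\<close>, where \<open>F = c\<^sub>m\<close>.\<close>

lemma set_integral_sliding_window_affine:
  fixes F :: "real \<Rightarrow> real"
  assumes F_meas: "F \<in> borel_measurable lborel" and F_bounded: "\<And>y. \<bar>F y\<bar> \<le> B"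
    and "x\<^sub>0 \<le> x\<^sub>1" and "x\<^sub>1 - x\<^sub>0 \<le> 2 * b"
    and right: "\<And>y. x\<^sub>0 + b < y \<Longrightarrow> y < x\<^sub>1 + b \<Longrightarrow> F y = c\<^sub>p"
    and left: "\<And>y. x\<^sub>0 - b < y \<Longrightarrow> y < x\<^sub>1 - b \<Longrightarrow> F y = c\<^sub>m"
  shows "\<exists>c. \<forall>x\<in>{x\<^sub>0..x\<^sub>1}. set_lebesgue_integral lborel {x - b<..<x + b} F = (c\<^sub>p - c\<^sub>m) * x + c"
proof -
  let ?I = "\<lambda>A. set_lebesgue_integral lborel A F"
  have integrable: "set_integrable lborel {u<..v} F" for u v
    unfolding set_integrable_def
    using F_meas F_bounded emeasure_bounded_finite[of "{u<..v}"]
    by (intro integrableI_bounded_set_indicator[where B = B])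
      (auto intro: bounded_subset[OF bounded_closed_interval[of u v]])
  have open_closed: "?I {u<..<v} = ?I {u<..v}" for u v
    using F_meas by (intro set_integral_cong_set)
      (auto simp: set_borel_measurable_def intro!: eventually_mono[OF AE_lborel_singleton[of v]])
  have interval_const: "?I {u<..v} = (v - u) * c"
    if "u \<le> v" "\<And>y. u < y \<Longrightarrow> y < v \<Longrightarrow> F y = c" for u v c
    using that by (subst set_integral_eq_const_AE[OF F_meas])
      (auto intro!: eventually_mono[OF AE_lborel_singleton[of v]])
  have "?I {x - b<..<x + b} = ?I {x\<^sub>0 - b<..<x\<^sub>0 + b} + (x - x\<^sub>0) * (c\<^sub>p - c\<^sub>m)"
    if x: "x\<^sub>0 \<le> x" "x \<le> x\<^sub>1" for x
  proof -
    have "?I {x - b<..<x + b} = ?I {x - b<..x\<^sub>0 + b} + ?I {x\<^sub>0 + b<..x + b}"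
      unfolding open_closed using x assms(3,4)
      by (subst set_integral_Un[symmetric]) (auto intro!: integrable arg_cong[where f = ?I])
    moreover have "?I {x\<^sub>0 - b<..<x\<^sub>0 + b} = ?I {x\<^sub>0 - b<..x - b} + ?I {x - b<..x\<^sub>0 + b}"
      unfolding open_closed using x assms(3,4)
      by (subst set_integral_Un[symmetric]) (auto intro!: integrable arg_cong[where f = ?I])
    moreover have "?I {x\<^sub>0 + b<..x + b} = (x - x\<^sub>0) * c\<^sub>p"
      using x by (subst interval_const[where c = c\<^sub>p]) (auto intro: right)
    moreover have "?I {x\<^sub>0 - b<..x - b} = (x - x\<^sub>0) * c\<^sub>m"
      using x by (subst interval_const[where c = c\<^sub>m]) (auto intro: left)
    ultimately show ?thesis by (simp add: algebra_simps)
  qed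
  then show ?thesis
    by (intro exI[of _ "?I {x\<^sub>0 - b<..<x\<^sub>0 + b} - (c\<^sub>p - c\<^sub>m) * x\<^sub>0"]) (auto simp: algebra_simps)
qed

lemma info_dens_eq_set_integral:
  "info_dens b P x = set_lebesgue_integral lborel {x - b<..<x + b} (\<lambda>y. rr b * ln (rr b / pY b P y))"
  unfolding info_dens_def set_lebesgue_integral_def pN_def
  by (rule Bochner_Integration.integral_cong) (auto split: split_indicator)

lemma info_dens_affine_if_pY_const_on_windows:
  assumes "b > 0" and pY_meas: "pY b P \<in> borel_measurable borel" and "finite (range (pY b P))"
    and "x\<^sub>0 \<le> x\<^sub>1" and "x\<^sub>1 - x\<^sub>0 \<le> 2 * b" and "M\<^sub>p > 0" and "M\<^sub>m > 0"
    and right: "\<And>y. x\<^sub>0 + b < y \<Longrightarrow> y < x\<^sub>1 + b \<Longrightarrow> pY b P y = rr b * M\<^sub>p"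
    and left: "\<And>y. x\<^sub>0 - b < y \<Longrightarrow> y < x\<^sub>1 - b \<Longrightarrow> pY b P y = rr b * M\<^sub>m"
  shows "\<exists>c. \<forall>x\<in>{x\<^sub>0..x\<^sub>1}. info_dens b P x = rr b * ln (M\<^sub>m / M\<^sub>p) * x + c"
proof -
  define F where "F = (\<lambda>y. rr b * ln (rr b / pY b P y))"
  have F_meas: "F \<in> borel_measurable lborel"
    unfolding F_def using pY_meas by measurable
  have F_bounded: "\<bar>F y\<bar> \<le> Max ((\<lambda>v. \<bar>rr b * ln (rr b / v)\<bar>) ` range (pY b P))" for y
    unfolding F_def using assms(3) by (intro Max_ge) auto
  have "rr b > 0" using \<open>b > 0\<close> by (simp add: rr_def)
  have F_right: "F y = - rr b * ln M\<^sub>p" if "x\<^sub>0 + b < y" "y < x\<^sub>1 + b" for y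
    using right[OF that] \<open>rr b > 0\<close> \<open>M\<^sub>p > 0\<close> by (simp add: F_def ln_div ln_mult)
  have F_left: "F y = - rr b * ln M\<^sub>m" if "x\<^sub>0 - b < y" "y < x\<^sub>1 - b" for y
    using left[OF that] \<open>rr b > 0\<close> \<open>M\<^sub>m > 0\<close> by (simp add: F_def ln_div ln_mult)
  obtain c where "\<forall>x\<in>{x\<^sub>0..x\<^sub>1}. set_lebesgue_integral lborel {x - b<..<x + b} F
      = (- rr b * ln M\<^sub>p - - rr b * ln M\<^sub>m) * x + c"
    using set_integral_sliding_window_affine[OF F_meas F_bounded assms(4,5) F_right F_left] by blast
  then show ?thesis
    using assms(6,7) by (intro exI[of _ c]) (simp add: info_dens_eq_set_integral F_def ln_div algebra_simps)
qed

lemma periodic_points_in_window: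
  fixes s :: "nat \<Rightarrow> real"
  assumes mono: "strict_mono s" and period: "\<And>k. s (k + p) = s k + d"
    and t: "s j < t" "t < s (j + 1)"
  shows "{k. t < s k \<and> s k < t + d} = {j<..j + p}"
    and "{k. t - d < s k \<and> s k < t} = {k. k \<le> j \<and> j < k + p}"
proof -
  have less: "s a < s c \<longleftrightarrow> a < c" for a c using mono by (simp add: strict_mono_less)
  have le: "s a \<le> s c \<longleftrightarrow> a \<le> c" for a c using mono by (simp add: strict_mono_less_eq)
  show "{k. t < s k \<and> s k < t + d} = {j<..j + p}"
  proof (intro set_eqI iffI)
    fix k assume "k \<in> {k. t < s k \<and> s k < t + d}"
    then have "s j < s k" "s k < s (j + 1 + p)" using t period[of "j + 1"] by auto
    then show "k \<in> {j<..j + p}" unfolding less by simp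
  next
    fix k assume "k \<in> {j<..j + p}"
    then have "s (j + 1) \<le> s k" "s k \<le> s (j + p)" unfolding le by auto
    then show "k \<in> {k. t < s k \<and> s k < t + d}" using t period[of j] by auto
  qed
  show "{k. t - d < s k \<and> s k < t} = {k. k \<le> j \<and> j < k + p}"
  proof (intro set_eqI iffI)
    fix k assume "k \<in> {k. t - d < s k \<and> s k < t}"
    then have "s k < s (j + 1)" "s j < s (k + p)" using t period[of k] by auto
    then show "k \<in> {k. k \<le> j \<and> j < k + p}" unfolding less by simp
  next
    fix k assume "k \<in> {k. k \<le> j \<and> j < k + p}"
    then have "s k \<le> s j" "s (j + 1) \<le> s (k + p)" unfolding le by auto
    then show "k \<in> {k. t - d < s k \<and> s k < t}" using t period[of k] by auto
  qed
qed

lemma info_dens_affine_between_periodic_points: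
  fixes s m :: "nat \<Rightarrow> real"
  assumes "b > 0" and mono: "strict_mono s" and period: "\<And>k. s (k + p) = s k + 2 * b"
    and support: "finite A" "\<forall>k\<in>A. pmf P (s k) = m k" "sum m A = 1"
    and "sum m (A \<inter> {j<..j + p}) > 0" and "sum m (A \<inter> {k. k \<le> j \<and> j < k + p}) > 0"
  shows "\<exists>c. \<forall>x\<in>{s j..s (j + 1)}. info_dens b P x =
    rr b * ln (sum m (A \<inter> {k. k \<le> j \<and> j < k + p}) / sum m (A \<inter> {j<..j + p})) * x + c"
proof (rule info_dens_affine_if_pY_const_on_windows)
  have inj: "inj_on s A" using strict_mono_imp_inj_on[OF mono] by (simp add: inj_on_def)
  note pY_near = pY_eq_sum_near_points[OF support(1) inj support(2,3)]
  show "pY b P \<in> borel_measurable borel" "finite (range (pY b P))"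
    using borel_measurable_pY[OF support(1) inj support(2,3)] finite_range_pY[OF support(1) inj support(2,3)]
    by auto
  have "p \<noteq> 0" using period[of 0] \<open>b > 0\<close> by (cases p) auto
  then have "s (j + 1) \<le> s (j + p)" using mono by (simp add: strict_mono_less_eq)
  then show "s (j + 1) - s j \<le> 2 * b" using period[of j] by simp
  show "s j \<le> s (j + 1)" using mono by (simp add: strict_mono_less_eq)
  show "pY b P y = rr b * sum m (A \<inter> {j<..j + p})" if "s j + b < y" "y < s (j + 1) + b" for y
  proof -
    have "{k \<in> A. y - b < s k \<and> s k < y + b} = A \<inter> {k. y - b < s k \<and> s k < y - b + 2 * b}" by auto
    also have "\<dots> = A \<inter> {j<..j + p}"
      using that periodic_points_in_window(1)[OF mono period, of j "y - b"] by auto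
    finally show ?thesis using pY_near by simp
  qed
  show "pY b P y = rr b * sum m (A \<inter> {k. k \<le> j \<and> j < k + p})"
    if "s j - b < y" "y < s (j + 1) - b" for y
  proof -
    have "{k \<in> A. y - b < s k \<and> s k < y + b} = A \<inter> {k. y + b - 2 * b < s k \<and> s k < y + b}" by auto
    also have "\<dots> = A \<inter> {k. k \<le> j \<and> j < k + p}"
      using that periodic_points_in_window(2)[OF mono period, of j "y + b"] by auto
    finally show ?thesis using pY_near by simp
  qed
qed (use assms in auto)

lemma std_pt_add_1:
  assumes "rr b \<in> \<nat>"
  shows "std_pt b (k + 1) = std_pt b k + 2 * b"
proof -
  obtain q where q: "rr b = real q" using \<open>rr b \<in> \<nat>\<close> by (auto elim: Nats_cases)
  then have "nn b = q" by (simp add: nn_def)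
  moreover have "2 * b = 1 / real q" unfolding q[symmetric] rr_def by simp
  ultimately show ?thesis
    using \<open>rr b \<in> \<nat>\<close> by (simp add: std_pt_def diff_divide_distrib)
qed

lemma std_pt_add_2:
  assumes "b > 0" and "rr b \<notin> \<nat>"
  shows "std_pt b (k + 2) = std_pt b k + 2 * b"
  using assms by (auto simp: std_pt_def rr_def field_simps)

lemma strict_mono_std_pt:
  assumes "b > 0"
  shows "strict_mono (std_pt b)"
proof (cases "rr b \<in> \<nat>")
  case True
  then show ?thesis using std_pt_add_1[OF True] assms by (simp add: strict_mono_Suc_iff)
next
  case False
  let ?r = "rr b" and ?n = "nn b"
  have "?r > 0" using assms by (simp add: rr_def)
  then have "real ?n \<le> ?r" "?r < real ?n + 1" by (simp_all add: nn_def of_nat_nat)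
  moreover have "real ?n \<noteq> ?r" using False by (metis of_nat_in_Nats)
  ultimately have "real ?n < ?r" "?r * ?r < ?r * (real ?n + 1)"
    using mult_strict_left_mono[of ?r "real ?n + 1" ?r] \<open>?r > 0\<close> by auto
  then have "std_pt b k < std_pt b (Suc k)" for k
    using False \<open>?r > 0\<close> \<open>?r < real ?n + 1\<close> by (auto simp: std_pt_def field_simps)
  then show ?thesis by (simp add: strict_mono_Suc_iff)
qed

lemma info_dens_affine_std_pt_non_integer:
  fixes m m' :: "nat \<Rightarrow> real"
  assumes "b > 0" and "rr b \<notin> \<nat>"
    and "\<forall>k\<in>{1..Nr b}. pmf P (std_pt b k) = m k" and "(\<Sum>k=1..Nr b. m k) = 1"
    and m': "m' = (\<lambda>k. if k \<in> {1..Nr b} then m k else 0)"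
    and "m' (j - 1) + m' j > 0" and "m' (j + 1) + m' (j + 2) > 0" and "j \<ge> 1"
  shows "\<exists>c. \<forall>x\<in>{std_pt b j..std_pt b (j + 1)}.
    info_dens b P x = rr b * ln ((m' (j - 1) + m' j) / (m' (j + 1) + m' (j + 2))) * x + c"
proof -
  have restrict: "sum m ({1..Nr b} \<inter> K) = sum m' K" if "finite K" for K
    using that by (simp add: m' sum.inter_restrict Int_commute)
  have "{j<..j + 2} = {j + 1, j + 2}" by auto
  then have right: "sum m ({1..Nr b} \<inter> {j<..j + 2}) = m' (j + 1) + m' (j + 2)"
    using restrict[of "{j + 1, j + 2}"] by simp
  have "{k. k \<le> j \<and> j < k + 2} = {j - 1, j}" using \<open>j \<ge> 1\<close> by auto
  then have left: "sum m ({1..Nr b} \<inter> {k. k \<le> j \<and> j < k + 2}) = m' (j - 1) + m' j"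
    using restrict[of "{j - 1, j}"] \<open>j \<ge> 1\<close> by simp
  show ?thesis
    using info_dens_affine_between_periodic_points[OF \<open>b > 0\<close> strict_mono_std_pt[OF assms(1)]
        std_pt_add_2[OF assms(1,2)] finite_atLeastAtMost assms(3,4), of j, unfolded right left]
      assms(6,7) by blast
qed

lemma info_dens_affine_std_pt_integer:
  fixes m :: "nat \<Rightarrow> real"
  assumes "b > 0" and "rr b \<in> \<nat>"
    and "\<forall>k\<in>{1..Nr b}. pmf P (std_pt b k) = m k" and "(\<Sum>k=1..Nr b. m k) = 1"
    and "m j > 0" and "m (j + 1) > 0" and "j \<in> {1..nn b}"
  shows "\<exists>c. \<forall>x\<in>{std_pt b j..std_pt b (j + 1)}.
    info_dens b P x = rr b * ln (m j / m (j + 1)) * x + c"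
proof -
  have "{1..Nr b} \<inter> {j<..j + 1} = {j + 1}" and "{1..Nr b} \<inter> {k. k \<le> j \<and> j < k + 1} = {j}"
    using \<open>rr b \<in> \<nat>\<close> \<open>j \<in> {1..nn b}\<close> by (auto simp: Nr_def)
  then show ?thesis
    using info_dens_affine_between_periodic_points[OF \<open>b > 0\<close> strict_mono_std_pt[OF assms(1)]
        std_pt_add_1[OF assms(2)] finite_atLeastAtMost assms(3,4), of j] assms(5,6)
    by simp
qed

theorem mainTheorem5:
  fixes b :: real and P :: "real pmf" and m :: "nat \<Rightarrow> real"
  assumes b_pos: "b > 0"
    and m_nonneg: "\<forall>j\<in>{1..Nr b}. m j \<ge> 0"
    and m_sum: "(\<Sum>j=1..Nr b. m j) = 1"
    and P_def: "\<forall>j\<in>{1..Nr b}. pmf P (std_pt b j) = m j"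
  shows
    "(rr b \<notin> \<nat> \<and>
       (\<forall>j\<in>{1..2 * nn b + 3}.
          (\<lambda>k. if k \<in> {1..Nr b} then m k else 0) (j - 1)
        + (\<lambda>k. if k \<in> {1..Nr b} then m k else 0) j > 0)
     \<longrightarrow> (\<forall>j\<in>{1..2 * nn b + 1}. \<exists>c. \<forall>x\<in>{std_pt b j..std_pt b (j + 1)}.
            info_dens b P x =
              rr b * ln (((\<lambda>k. if k \<in> {1..Nr b} then m k else 0) (j - 1)
                          + (\<lambda>k. if k \<in> {1..Nr b} then m k else 0) j)
                       / ((\<lambda>k. if k \<in> {1..Nr b} then m k else 0) (j + 1)
                          + (\<lambda>k. if k \<in> {1..Nr b} then m k else 0) (j + 2))) * x + c))
   \<and>
    (rr b \<in> \<nat> \<and> (\<forall>j\<in>{1..Nr b}. m j > 0)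
     \<longrightarrow> (\<forall>j\<in>{1..nn b}. \<exists>c. \<forall>x\<in>{std_pt b j..std_pt b (j + 1)}.
            info_dens b P x = rr b * ln (m j / m (j + 1)) * x + c))"
proof (intro conjI impI ballI)
  let ?m' = "\<lambda>k. if k \<in> {1..Nr b} then m k else 0"
  fix j
  assume H: "rr b \<notin> \<nat> \<and> (\<forall>j\<in>{1..2 * nn b + 3}. ?m' (j - 1) + ?m' j > 0)"
    and j: "j \<in> {1..2 * nn b + 1}"
  have left: "?m' (j - 1) + ?m' j > 0" by (rule bspec[OF conjunct2[OF H]]) (use j in simp)
  have "?m' (j + 2 - 1) + ?m' (j + 2) > 0" by (rule bspec[OF conjunct2[OF H]]) (use j in simp)
  moreover have "j + 2 - 1 = j + 1" by simp
  ultimately have right: "?m' (j + 1) + ?m' (j + 2) > 0" by (simp only:)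
  show "\<exists>c. \<forall>x\<in>{std_pt b j..std_pt b (j + 1)}.
      info_dens b P x = rr b * ln ((?m' (j - 1) + ?m' j) / (?m' (j + 1) + ?m' (j + 2))) * x + c"
    using info_dens_affine_std_pt_non_integer[OF b_pos _ P_def m_sum refl left right] H j by simp
next
  fix j
  assume "rr b \<in> \<nat> \<and> (\<forall>j\<in>{1..Nr b}. m j > 0)" and "j \<in> {1..nn b}"
  then show "\<exists>c. \<forall>x\<in>{std_pt b j..std_pt b (j + 1)}.
      info_dens b P x = rr b * ln (m j / m (j + 1)) * x + c"
    by (intro info_dens_affine_std_pt_integer[OF b_pos _ P_def m_sum]) (auto simp: Nr_def)
qed

end
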